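(* Fix $\lambda_p,\lambda_s\in(0,1)$ and $p_a\in(0,1]$. On the set of $p_q\in(0,1)$ for which $(\lambda_p,\lambda_s)$ is in the stable region, i.e. $\lambda_p<\frac{f_{sd}(1-p_q)\mu_p}{f_{sd}(1-p_q)+p_a f_{ps}(1-f_{pd})}$ and $\lambda_s<p_q f_{sd}(1-\lambda_p/\mu_p)$ with $\mu_p=f_{pd}+p_a f_{ps}(1-f_{pd})$, the average PU delay $D_p$ is monotonically increasing in $p_q$ and the average SU delay $D_s$ is monotonically decreasing in $p_q$.
   Context: Constants $f_{pd},f_{ps},f_{sd}\in(0,1)$ with $f_{pd}<f_{sd}$. Set $a=p_a f_{ps}(1-f_{pd})$, $\mu_p=f_{pd}+a$. $D_p=(N_p+N_{sp})/\lambda_p$ and $D_s=N_s/\lambda_s$, where $N_p=\frac{\lambda_p-\lambda_p^2}{\mu_p-\lambda_p}$, $N_{sp}=\frac{m\lambda_p^2+n\lambda_p}{\alpha\lambda_p^2+\beta\lambda_p+\gamma}$, $N_s=\frac{\lambda_p\lambda_s A+(\lambda_s^2-\lambda_s)B(B+\lambda_p)}{BC}$ with $m=a\big[\frac{(1-p_q)f_{sd}-f_{pd}}{\mu_p}-(1-p_q)f_{sd}-a\big]$, $n=a\mu_p$, $\alpha=(1-p_q)f_{sd}+a$, $\beta=\mu_p[-2(1-p_q)f_{sd}-a]$, $\gamma=(1-p_q)f_{sd}\mu_p^2$, $A=p_q f_{sd}(\mu_p-1)$, $B=\mu_p-\lambda_p$, $C=(\lambda_s-p_q f_{sd})\mu_p+p_q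 f_{sd}\lambda_p$. These are the average packet delays of the PU and SU in a cognitive relaying system where the SU serves its own queue w.p. $p_q$ (relay queue w.p. $1-p_q$) when the PU is idle, and admits undelivered overheard PU packets to its relay queue w.p. $p_a$. *)

theory Defs
  imports Complex_Main
begin

text \<open>Parameters: fpd fps fsd (channel success probabilities), pa (admission prob.),
  pq (SU own-queue prob.), lp = lambda_p, ls = lambda_s.\<close>

definition a_par :: "real \<Rightarrow> real \<Rightarrow> real \<Rightarrow> real" where
  "a_par fpd fps pa = pa * fps * (1 - fpd)"

definition mu_p :: "real \<Rightarrow> real \<Rightarrow> real \<Rightarrow> real" where
  "mu_p fpd fps pa = fpd + a_par fpd fps pa"

definition N_p :: "real \<Rightarrow> real \<Rightarrow> real \<Rightarrow> real \<Rightarrow> real" where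
  "N_p fpd fps pa lp = (lp - lp^2) / (mu_p fpd fps pa - lp)"

definition N_sp :: "real \<Rightarrow> real \<Rightarrow> real \<Rightarrow> real \<Rightarrow> real \<Rightarrow> real \<Rightarrow> real" where
  "N_sp fpd fps fsd pa pq lp =
    (let a = a_par fpd fps pa; mu = mu_p fpd fps pa;
         m = a * (((1 - pq) * fsd - fpd) / mu - (1 - pq) * fsd - a);
         n = a * mu;
         \<alpha> = (1 - pq) * fsd + a;
         \<beta> = mu * (- 2 * (1 - pq) * fsd - a);
         \<gamma> = (1 - pq) * fsd * mu^2
     in (m * lp^2 + n * lp) / (\<alpha> * lp^2 + \<beta> * lp + \<gamma>))"

definition D_p :: "real \<Rightarrow> real \<Rightarrow> real \<Rightarrow> real \<Rightarrow> real \<Rightarrow> real \<Rightarrow> real" where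
  "D_p fpd fps fsd pa pq lp = (N_p fpd fps pa lp + N_sp fpd fps fsd pa pq lp) / lp"

definition N_s :: "real \<Rightarrow> real \<Rightarrow> real \<Rightarrow> real \<Rightarrow> real \<Rightarrow> real \<Rightarrow> real \<Rightarrow> real" where
  "N_s fpd fps fsd pa pq lp ls =
    (let mu = mu_p fpd fps pa;
         A = pq * fsd * (mu - 1);
         B = mu - lp;
         C = (ls - pq * fsd) * mu + pq * fsd * lp
     in (lp * ls * A + (ls^2 - ls) * B * (B + lp)) / (B * C))"

definition D_s :: "real \<Rightarrow> real \<Rightarrow> real \<Rightarrow> real \<Rightarrow> real \<Rightarrow> real \<Rightarrow> real \<Rightarrow> real" where
  "D_s fpd fps fsd pa pq lp ls = N_s fpd fps fsd pa pq lp ls / ls"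

definition stable :: "real \<Rightarrow> real \<Rightarrow> real \<Rightarrow> real \<Rightarrow> real \<Rightarrow> real \<Rightarrow> real \<Rightarrow> bool" where
  "stable fpd fps fsd pa pq lp ls \<longleftrightarrow>
     lp < fsd * (1 - pq) * mu_p fpd fps pa / (fsd * (1 - pq) + pa * fps * (1 - fpd)) \<and>
     ls < pq * fsd * (1 - lp / mu_p fpd fps pa)"

end

theory Submission
  imports Defs
begin

text \<open>
  Write a = a_par, mu = mu_p and B = mu - lp.  After clearing the inner
  fraction, both delays are linear-fractional functions of a quantity that depends
  monotonically on pq:
    N_sp = (P r + Q) / (r B^2 - B a lp)       with r = (1 - pq) fsd,
    D_s  = (P' q + Q') / (q B^2 - B ls mu)    with q = pq fsd,
  where P, Q, P', Q' \<ge> 0 do not depend on pq.  A function t \<mapsto> (P t + Q) / (t B - L)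
  with nonnegative P, Q, L is antitone wherever its denominator is positive
  (lemma linear_fractional_antitone), and the two stability conditions imply
  that lp < mu and that both denominators are positive.  Since r decreases and q
  increases in pq, N_sp (hence D_p = (N_p + N_sp) / lp, where N_p does not depend
  on pq) increases and D_s decreases.
\<close>

lemma linear_fractional_antitone:
  fixes P Q B L x y :: real
  assumes "0 \<le> P" "0 \<le> Q" "0 < B" "0 \<le> L" "x \<le> y" "L < x * B"
  shows "(P * y + Q) / (y * B - L) \<le> (P * x + Q) / (x * B - L)"
proof -
  have den_x: "0 < x * B - L" using assms by simp
  have "x * B \<le> y * B" using assms by (simp add: mult_right_mono)
  hence den_y: "0 < y * B - L" using den_x by simp
  have "0 \<le> (y - x) * (P * L + Q * B)" using assms by (intro mult_nonneg_nonneg) auto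
  hence "(P * y + Q) * (x * B - L) \<le> (P * x + Q) * (y * B - L)" by (simp add: algebra_simps)
  thus ?thesis using den_x den_y by (simp add: divide_simps)
qed

lemma service_rate_bounds:
  assumes "0 < fpd" "fpd < 1" "0 < fps" "fps < 1" "0 < pa" "pa \<le> 1"
  shows "0 < a_par fpd fps pa" "mu_p fpd fps pa = fpd + a_par fpd fps pa"
    "0 < mu_p fpd fps pa" "mu_p fpd fps pa < 1"
proof -
  have "pa * fps < 1" using assms mult_right_mono[of pa 1 fps] by linarith
  hence "a_par fpd fps pa < 1 - fpd" unfolding a_par_def using assms by simp
  moreover show "0 < a_par fpd fps pa" unfolding a_par_def using assms by simp
  moreover show mu: "mu_p fpd fps pa = fpd + a_par fpd fps pa" by (simp add: mu_p_def)
  ultimately show "0 < mu_p fpd fps pa" "mu_p fpd fps pa < 1" using assms by auto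
qed

lemma N_sp_linear_fractional:
  assumes "mu_p fpd fps pa \<noteq> 0"
  defines "a \<equiv> a_par fpd fps pa" and "mu \<equiv> mu_p fpd fps pa"
  shows "N_sp fpd fps fsd pa pq lp =
    ((a * lp * lp * (1 - mu) / mu) * ((1 - pq) * fsd) + a * lp * (mu - lp * a - lp * fpd / mu))
      / (((1 - pq) * fsd) * (mu - lp)^2 - (mu - lp) * a * lp)"
proof -
  have mu: "mu = fpd + a" unfolding mu_def a_def mu_p_def by simp
  have "((1 - pq) * fsd + a) * lp^2 + (mu * (- 2 * (1 - pq) * fsd - a)) * lp
          + (1 - pq) * fsd * mu^2
      = ((1 - pq) * fsd) * (mu - lp)^2 - (mu - lp) * a * lp"
    using mu by (simp add: algebra_simps power2_eq_square)
  moreover have "(a * (((1 - pq) * fsd - fpd) / mu - (1 - pq) * fsd - a)) * lp^2 + (a * mu) * lp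
      = (a * lp * lp * (1 - mu) / mu) * ((1 - pq) * fsd) + a * lp * (mu - lp * a - lp * fpd / mu)"
    using assms(1) unfolding mu_def by (simp add: field_simps power2_eq_square)
  ultimately show ?thesis unfolding N_sp_def Let_def a_def mu_def by simp
qed

text \<open>Normal form of D_s as a linear-fractional function of q = pq fsd; it needs the
  three factors of the denominator of N_s to be nonzero.\<close>
lemma D_s_linear_fractional:
  assumes "mu_p fpd fps pa \<noteq> lp" "ls \<noteq> 0"
    and "ls * mu_p fpd fps pa \<noteq> pq * fsd * (mu_p fpd fps pa - lp)"
  defines "mu \<equiv> mu_p fpd fps pa" and "q \<equiv> pq * fsd"
  shows "D_s fpd fps fsd pa pq lp ls =
    (lp * (1 - mu) * q + (1 - ls) * (mu - lp) * mu) / (q * (mu - lp)^2 - (mu - lp) * ls * mu)"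
proof -
  have C: "(ls - q) * mu + q * lp \<noteq> 0"
    using assms(3) unfolding mu_def q_def by (simp add: algebra_simps)
  have den: "q * (mu - lp)^2 - (mu - lp) * ls * mu = - ((mu - lp) * ((ls - q) * mu + q * lp))"
    by (simp add: algebra_simps power2_eq_square)
  have num: "lp * ls * (q * (mu - 1)) + (ls^2 - ls) * (mu - lp) * ((mu - lp) + lp)
      = - (ls * (lp * (1 - mu) * q + (1 - ls) * (mu - lp) * mu))"
    by (simp add: algebra_simps power2_eq_square)
  have "N_s fpd fps fsd pa pq lp ls
      = (lp * ls * (q * (mu - 1)) + (ls^2 - ls) * (mu - lp) * ((mu - lp) + lp))
          / ((mu - lp) * ((ls - q) * mu + q * lp))"
    unfolding N_s_def Let_def mu_def q_def by (simp add: mult.assoc)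
  thus ?thesis unfolding D_s_def num using den assms(1,2) C
    by (simp add: mu_def divide_divide_eq_left)
qed

lemma stable_denominators_pos:
  assumes "0 < a_par fpd fps pa" "0 < mu_p fpd fps pa" "0 < lp" "0 < fsd" "pq < 1"
    and "stable fpd fps fsd pa pq lp ls"
  defines "a \<equiv> a_par fpd fps pa" and "mu \<equiv> mu_p fpd fps pa"
  shows "lp < mu" "(mu - lp) * a * lp < ((1 - pq) * fsd) * (mu - lp)^2"
    "(mu - lp) * ls * mu < (pq * fsd) * (mu - lp)^2"
proof -
  have r: "0 < (1 - pq) * fsd" using assms by simp
  have stab: "lp < fsd * (1 - pq) * mu / (fsd * (1 - pq) + a)" "ls < pq * fsd * (1 - lp / mu)"
    using assms(6) unfolding stable_def a_def a_par_def mu_def by (simp_all only: mult.assoc)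
  have "0 < fsd * (1 - pq) + a" using r assms(1) unfolding a_def by (simp add: mult.commute)
  hence "lp * (fsd * (1 - pq) + a) < fsd * (1 - pq) * mu" using stab(1) by (simp add: pos_less_divide_eq)
  hence pu: "a * lp < ((1 - pq) * fsd) * (mu - lp)" by (simp add: algebra_simps)
  moreover have "0 < a * lp" using assms(1,3) unfolding a_def by simp
  ultimately have "0 < ((1 - pq) * fsd) * (mu - lp)" by linarith
  thus lp_mu: "lp < mu" using r by (simp add: zero_less_mult_iff)
  show "(mu - lp) * a * lp < ((1 - pq) * fsd) * (mu - lp)^2"
    using mult_strict_left_mono[OF pu, of "mu - lp"] lp_mu
    by (simp add: algebra_simps power2_eq_square)
  have "ls * mu < pq * fsd * (1 - lp / mu) * mu" using stab(2) assms(2) unfolding mu_def by simp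
  also have "\<dots> = pq * fsd * (mu - lp)" using assms(2) unfolding mu_def by (simp add: field_simps)
  finally have su: "ls * mu < pq * fsd * (mu - lp)" .
  show "(mu - lp) * ls * mu < (pq * fsd) * (mu - lp)^2"
    using mult_strict_left_mono[OF su, of "mu - lp"] lp_mu
    by (simp add: algebra_simps power2_eq_square)
qed

lemma N_sp_constant_pos:
  fixes a fpd lp mu :: real
  assumes "0 < a" "0 < fpd" "0 < lp" "mu = fpd + a" "mu < 1" "lp < mu"
  shows "0 < mu - lp * a - lp * fpd / mu"
proof -
  have mu_pos: "0 < mu" using assms by simp
  have "lp * a + lp * fpd / mu < mu * a + mu * fpd / mu"
    using assms mu_pos by (intro add_strict_mono mult_strict_right_mono divide_strict_right_mono) auto
  also have "\<dots> = mu * a + fpd" using mu_pos by simp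
  also have "\<dots> < mu" using assms mult_strict_right_mono[of mu 1 a] by simp
  finally show ?thesis by simp
qed

lemma D_p_increasing:
  assumes "0 < fpd" "fpd < 1" "0 < fps" "fps < 1" "0 < fsd" "0 < lp" "lp < 1" "0 < pa" "pa \<le> 1"
    and "x \<le> y" "y < 1" "stable fpd fps fsd pa y lp ls"
  shows "D_p fpd fps fsd pa x lp \<le> D_p fpd fps fsd pa y lp"
proof -
  define a where "a = a_par fpd fps pa"
  define mu where "mu = mu_p fpd fps pa"
  note rate_bounds = service_rate_bounds[OF assms(1-4,8,9)]
  note rate = rate_bounds[folded a_def mu_def]
  note den = stable_denominators_pos[OF rate_bounds(1,3) assms(6,5,11,12), folded a_def mu_def]
  have "((a * lp * lp * (1 - mu) / mu) * ((1 - x) * fsd) + a * lp * (mu - lp * a - lp * fpd / mu))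
          / (((1 - x) * fsd) * (mu - lp)^2 - (mu - lp) * a * lp)
      \<le> ((a * lp * lp * (1 - mu) / mu) * ((1 - y) * fsd) + a * lp * (mu - lp * a - lp * fpd / mu))
          / (((1 - y) * fsd) * (mu - lp)^2 - (mu - lp) * a * lp)"
  proof (rule linear_fractional_antitone)
    show "0 \<le> a * lp * lp * (1 - mu) / mu" using rate assms by simp
    show "0 \<le> a * lp * (mu - lp * a - lp * fpd / mu)"
      using N_sp_constant_pos[OF rate(1) assms(1,6) rate(2,4) den(1)] rate assms by simp
    show "0 < (mu - lp)^2" using den(1) by simp
    show "0 \<le> (mu - lp) * a * lp" using den(1) rate assms by simp
    show "(1 - y) * fsd \<le> (1 - x) * fsd" using assms by (intro mult_right_mono) auto
    show "(mu - lp) * a * lp < ((1 - y) * fsd) * (mu - lp)^2" using den(2) .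
  qed
  hence "N_sp fpd fps fsd pa x lp \<le> N_sp fpd fps fsd pa y lp"
    using rate(3) by (simp add: N_sp_linear_fractional a_def mu_def)
  thus ?thesis unfolding D_p_def using assms by (simp add: divide_right_mono)
qed

lemma D_s_decreasing:
  assumes "0 < fpd" "fpd < 1" "0 < fps" "fps < 1" "0 < fsd" "0 < lp" "0 < ls" "ls < 1"
    and "0 < pa" "pa \<le> 1" "x \<le> y" "x < 1" "y < 1"
    and "stable fpd fps fsd pa x lp ls" "stable fpd fps fsd pa y lp ls"
  shows "D_s fpd fps fsd pa y lp ls \<le> D_s fpd fps fsd pa x lp ls"
proof -
  define mu where "mu = mu_p fpd fps pa"
  note rate_bounds = service_rate_bounds[OF assms(1-4,9,10)]
  note rate = rate_bounds[folded mu_def]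
  note den_x = stable_denominators_pos[OF rate_bounds(1,3) assms(6,5,12,14), folded mu_def]
  note den_y = stable_denominators_pos[OF rate_bounds(1,3) assms(6,5,13,15), folded mu_def]
  have normal_form: "D_s fpd fps fsd pa z lp ls =
      (lp * (1 - mu) * (z * fsd) + (1 - ls) * (mu - lp) * mu)
        / ((z * fsd) * (mu - lp)^2 - (mu - lp) * ls * mu)"
    if "(mu - lp) * ls * mu < (z * fsd) * (mu - lp)^2" for z
  proof -
    have "(mu - lp) * (ls * mu) < (mu - lp) * (z * fsd * (mu - lp))"
      using that by (simp add: algebra_simps power2_eq_square)
    hence "ls * mu < z * fsd * (mu - lp)" using den_x(1) by simp
    thus ?thesis using D_s_linear_fractional[of fpd fps pa lp ls z fsd] den_x(1) assms(7)
      unfolding mu_def by simp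
  qed
  have "(lp * (1 - mu) * (y * fsd) + (1 - ls) * (mu - lp) * mu)
          / ((y * fsd) * (mu - lp)^2 - (mu - lp) * ls * mu)
      \<le> (lp * (1 - mu) * (x * fsd) + (1 - ls) * (mu - lp) * mu)
          / ((x * fsd) * (mu - lp)^2 - (mu - lp) * ls * mu)"
  proof (rule linear_fractional_antitone)
    show "0 \<le> lp * (1 - mu)" using rate assms by simp
    show "0 \<le> (1 - ls) * (mu - lp) * mu" using den_x(1) rate assms by simp
    show "0 < (mu - lp)^2" using den_x(1) by simp
    show "0 \<le> (mu - lp) * ls * mu" using den_x(1) rate assms by simp
    show "x * fsd \<le> y * fsd" using assms by (intro mult_right_mono) auto
    show "(mu - lp) * ls * mu < (x * fsd) * (mu - lp)^2" using den_x(3) .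
  qed
  thus ?thesis using normal_form[OF den_x(3)] normal_form[OF den_y(3)] by simp
qed

theorem lemma3:
  fixes fpd fps fsd pa lp ls :: real
  assumes "0 < fpd" "fpd < 1" "0 < fps" "fps < 1" "0 < fsd" "fsd < 1" "fpd < fsd"
    and "0 < lp" "lp < 1" "0 < ls" "ls < 1" "0 < pa" "pa \<le> 1"
  defines "S \<equiv> {pq. 0 < pq \<and> pq < 1 \<and> stable fpd fps fsd pa pq lp ls}"
  shows "mono_on S (\<lambda>pq. D_p fpd fps fsd pa pq lp) \<and>
         antimono_on S (\<lambda>pq. D_s fpd fps fsd pa pq lp ls)"
proof
  show "mono_on S (\<lambda>pq. D_p fpd fps fsd pa pq lp)"
    using assms D_p_increasing[of fpd fps fsd lp pa] unfolding S_def
    by (intro mono_onI) blast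
  show "antimono_on S (\<lambda>pq. D_s fpd fps fsd pa pq lp ls)"
    using assms D_s_decreasing[of fpd fps fsd lp ls pa] unfolding S_def
    by (intro monotone_onI) blast
qed

end
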